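(* Let $G,G'$ be groups, $Q$ a non-empty set, $\alpha\in[0,1]$, and $f:G\to G'$ an anti-homomorphism. Let $\theta$ be a $Q$-fuzzy subset of $G$ such that $\theta^\alpha$ is an $\alpha$-$Q$-fuzzy subgroup of $G$. Then the image $f(\theta^\alpha)$ is an $\alpha$-$Q$-fuzzy subgroup of $G'$, in the sense that $f(\theta^\alpha)(ab,q)\ge\min\{f(\theta^\alpha)(a,q),f(\theta^\alpha)(b,q)\}$ and $f(\theta^\alpha)(a^{-1},q)\ge f(\theta^\alpha)(a,q)$ for all $a,b\in G'$, $q\in Q$.
   Context: A map $f:G\to G'$ between groups is an anti-homomorphism if $f(xy)=f(y)f(x)$ for all $x,y\in G$. A $Q$-fuzzy subset of a group $H$ is a map $H\times Q\to[0,1]$. For $\alpha\in[0,1]$, $\theta^\alpha(x,q)=\min\{\theta(x,q),\alpha\}$. $\theta^\alpha$ is called an $\alpha$-$Q$-fuzzy subgroup of $G$ if $\theta^\alpha(xy,q)\ge\min\{\theta^\alpha(x,q),\theta^\alpha(y,q)\}$ and $\theta^\alpha(x^{-1},q)\ge\theta^\alpha(x,q)$ for all $x,y\in G$, $q\in Q$. The image of a $Q$-fuzzy subset $\mu$ of $G$ is $f(\mu)(x',q)=\sup\{\mu(x,q): x\in G,\ f(x)=x'\}$ (with $\sup\emptyset=0$). *)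

theory Defs
  imports Complex_Main "HOL-Algebra.Group"
begin

definition anti_hom :: "('a, 'c) monoid_scheme \<Rightarrow> ('b, 'd) monoid_scheme \<Rightarrow> ('a \<Rightarrow> 'b) \<Rightarrow> bool" where
  "anti_hom G H f \<longleftrightarrow> f \<in> carrier G \<rightarrow> carrier H \<and>
     (\<forall>x\<in>carrier G. \<forall>y\<in>carrier G. f (x \<otimes>\<^bsub>G\<^esub> y) = f y \<otimes>\<^bsub>H\<^esub> f x)"

definition Q_fuzzy_subset :: "('a, 'c) monoid_scheme \<Rightarrow> 'q set \<Rightarrow> ('a \<Rightarrow> 'q \<Rightarrow> real) \<Rightarrow> bool" where
  "Q_fuzzy_subset G Q \<theta> \<longleftrightarrow> (\<forall>x\<in>carrier G. \<forall>q\<in>Q. 0 \<le> \<theta> x q \<and> \<theta> x q \<le> 1)"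

definition alpha_cut :: "('a \<Rightarrow> 'q \<Rightarrow> real) \<Rightarrow> real \<Rightarrow> ('a \<Rightarrow> 'q \<Rightarrow> real)" where
  "alpha_cut \<theta> \<alpha> = (\<lambda>x q. min (\<theta> x q) \<alpha>)"

definition Q_fuzzy_subgroup_cond :: "('a, 'c) monoid_scheme \<Rightarrow> 'q set \<Rightarrow> ('a \<Rightarrow> 'q \<Rightarrow> real) \<Rightarrow> bool" where
  "Q_fuzzy_subgroup_cond G Q \<mu> \<longleftrightarrow>
     (\<forall>x\<in>carrier G. \<forall>y\<in>carrier G. \<forall>q\<in>Q. \<mu> (x \<otimes>\<^bsub>G\<^esub> y) q \<ge> min (\<mu> x q) (\<mu> y q)) \<and>
     (\<forall>x\<in>carrier G. \<forall>q\<in>Q. \<mu> (inv\<^bsub>G\<^esub> x) q \<ge> \<mu> x q)"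

definition fuzzy_image :: "('a, 'c) monoid_scheme \<Rightarrow> ('a \<Rightarrow> 'b) \<Rightarrow> ('a \<Rightarrow> 'q \<Rightarrow> real) \<Rightarrow> ('b \<Rightarrow> 'q \<Rightarrow> real)" where
  "fuzzy_image G f \<mu> = (\<lambda>x' q. if {x\<in>carrier G. f x = x'} = {} then 0
       else Sup {\<mu> x q | x. x \<in> carrier G \<and> f x = x'})"

end

theory Submission
  imports Defs
begin

text \<open>An anti-homomorphism
  maps y x to f x f y and inv x to inv (f x), so near-optimal preimages x of a' and y of b'
  give the preimage y x of a' b', and inverting a preimage of a' gives one of inv a'.
  Empty fibres, where the image is 0, only need \<mu> = min \<theta> \<alpha> to be nonnegative and bounded
  above.\<close>

lemma anti_hom_one:
  assumes "group G" "group H" "anti_hom G H f"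
  shows "f \<one>\<^bsub>G\<^esub> = \<one>\<^bsub>H\<^esub>"
proof -
  interpret G: group G by fact
  interpret H: group H by fact
  have "f \<one>\<^bsub>G\<^esub> \<otimes>\<^bsub>H\<^esub> f \<one>\<^bsub>G\<^esub> = f \<one>\<^bsub>G\<^esub>" "f \<one>\<^bsub>G\<^esub> \<in> carrier H"
    using assms(3) G.one_closed unfolding anti_hom_def by (metis G.l_one, blast)
  then show ?thesis by (metis H.one_closed H.r_cancel_one)
qed

lemma anti_hom_inv:
  assumes "group G" "group H" "anti_hom G H f" "x \<in> carrier G"
  shows "f (inv\<^bsub>G\<^esub> x) = inv\<^bsub>H\<^esub> f x"
proof -
  interpret G: group G by fact
  interpret H: group H by fact
  have f_mult: "\<forall>y\<in>carrier G. f (x \<otimes>\<^bsub>G\<^esub> y) = f y \<otimes>\<^bsub>H\<^esub> f x"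
    and f_closed: "f \<in> carrier G \<rightarrow> carrier H"
    using assms(3,4) unfolding anti_hom_def by blast+
  have "f (inv\<^bsub>G\<^esub> x) \<otimes>\<^bsub>H\<^esub> f x = f (x \<otimes>\<^bsub>G\<^esub> inv\<^bsub>G\<^esub> x)"
    using bspec[OF f_mult G.inv_closed[OF assms(4)]] by (rule sym)
  also have "\<dots> = \<one>\<^bsub>H\<^esub>"
    using anti_hom_one[OF assms(1-3)] assms(4) by simp
  finally have "inv\<^bsub>H\<^esub> f x = f (inv\<^bsub>G\<^esub> x)"
    using funcset_mem[OF f_closed] assms(4) by (simp add: H.inv_equality)
  then show ?thesis ..
qed

lemma fuzzy_image_upper:
  assumes "x \<in> carrier G" "bdd_above ((\<lambda>x. \<mu> x q) ` carrier G)"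
  shows "\<mu> x q \<le> fuzzy_image G f \<mu> (f x) q"
proof -
  have "bdd_above {\<mu> y q | y. y \<in> carrier G \<and> f y = f x}"
    using assms(2) by (rule bdd_above_mono) blast
  then show ?thesis
    using assms(1) unfolding fuzzy_image_def by (auto intro: cSup_upper)
qed

lemma fuzzy_image_nonneg:
  assumes "\<forall>x\<in>carrier G. 0 \<le> \<mu> x q" "bdd_above ((\<lambda>x. \<mu> x q) ` carrier G)"
  shows "0 \<le> fuzzy_image G f \<mu> a q"
proof (cases "\<exists>x\<in>carrier G. f x = a")
  case True
  then obtain x where "x \<in> carrier G" "f x = a" by blast
  then show ?thesis
    using assms fuzzy_image_upper[of x G \<mu> q f] by force
qed (simp add: fuzzy_image_def)

lemma fuzzy_image_least:
  assumes "\<And>x. x \<in> carrier G \<Longrightarrow> f x = a \<Longrightarrow> \<mu> x q \<le> c" "0 \<le> c"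
  shows "fuzzy_image G f \<mu> a q \<le> c"
  using assms unfolding fuzzy_image_def by (auto intro: cSup_least)

lemma less_fuzzy_image_obtain:
  assumes "t < fuzzy_image G f \<mu> a q" "0 \<le> t"
  obtains x where "x \<in> carrier G" "f x = a" "t < \<mu> x q"
proof -
  have "{x \<in> carrier G. f x = a} \<noteq> {}"
  proof
    assume "{x \<in> carrier G. f x = a} = {}"
    then have "fuzzy_image G f \<mu> a q = 0"
      unfolding fuzzy_image_def by simp
    then show False
      using assms by linarith
  qed
  then have "t < Sup {\<mu> x q | x. x \<in> carrier G \<and> f x = a}"
    using assms(1) unfolding fuzzy_image_def by (simp only: if_False)
  moreover have "{\<mu> x q | x. x \<in> carrier G \<and> f x = a} \<noteq> {}"
    using \<open>{x \<in> carrier G. f x = a} \<noteq> {}\<close> by blast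
  ultimately show ?thesis
    using that by (auto elim: less_cSupE)
qed

lemma fuzzy_image_mult_ge:
  assumes "monoid G" "anti_hom G G' f"
    and nonneg: "\<forall>x\<in>carrier G. 0 \<le> \<mu> x q"
    and bdd: "bdd_above ((\<lambda>x. \<mu> x q) ` carrier G)"
    and mult: "\<forall>x\<in>carrier G. \<forall>y\<in>carrier G. min (\<mu> x q) (\<mu> y q) \<le> \<mu> (x \<otimes>\<^bsub>G\<^esub> y) q"
  shows "min (fuzzy_image G f \<mu> a q) (fuzzy_image G f \<mu> b q) \<le> fuzzy_image G f \<mu> (a \<otimes>\<^bsub>G'\<^esub> b) q"
    (is "_ \<le> ?t")
proof (rule ccontr)
  interpret G: monoid G by fact
  assume "\<not> ?thesis"
  then have "?t < fuzzy_image G f \<mu> a q" "?t < fuzzy_image G f \<mu> b q"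
    by linarith+
  moreover have "0 \<le> ?t"
    using nonneg bdd by (rule fuzzy_image_nonneg)
  ultimately obtain x y where x: "x \<in> carrier G" "f x = a" "?t < \<mu> x q"
    and y: "y \<in> carrier G" "f y = b" "?t < \<mu> y q"
    by (meson less_fuzzy_image_obtain)
  have "f (y \<otimes>\<^bsub>G\<^esub> x) = a \<otimes>\<^bsub>G'\<^esub> b"
    using assms(2) x y unfolding anti_hom_def by blast
  then have "\<mu> (y \<otimes>\<^bsub>G\<^esub> x) q \<le> ?t"
    using fuzzy_image_upper[of _ G \<mu> q f, OF G.m_closed[OF y(1) x(1)] bdd] by simp
  moreover have "min (\<mu> y q) (\<mu> x q) \<le> \<mu> (y \<otimes>\<^bsub>G\<^esub> x) q"
    using mult x(1) y(1) by blast
  ultimately show False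
    using x(3) y(3) by linarith
qed

lemma fuzzy_image_inv_ge:
  assumes "group G" "group G'" "anti_hom G G' f"
    and nonneg: "\<forall>x\<in>carrier G. 0 \<le> \<mu> x q"
    and bdd: "bdd_above ((\<lambda>x. \<mu> x q) ` carrier G)"
    and inv: "\<forall>x\<in>carrier G. \<mu> x q \<le> \<mu> (inv\<^bsub>G\<^esub> x) q"
  shows "fuzzy_image G f \<mu> a q \<le> fuzzy_image G f \<mu> (inv\<^bsub>G'\<^esub> a) q"
proof (rule fuzzy_image_least)
  interpret G: group G by fact
  fix x assume x: "x \<in> carrier G" "f x = a"
  have "\<mu> x q \<le> \<mu> (inv\<^bsub>G\<^esub> x) q"
    using inv x(1) by blast
  also have "\<dots> \<le> fuzzy_image G f \<mu> (f (inv\<^bsub>G\<^esub> x)) q"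
    using fuzzy_image_upper[of _ G \<mu> q f, OF G.inv_closed[OF x(1)] bdd] .
  also have "f (inv\<^bsub>G\<^esub> x) = inv\<^bsub>G'\<^esub> a"
    using anti_hom_inv[OF assms(1-3) x(1)] x(2) by simp
  finally show "\<mu> x q \<le> fuzzy_image G f \<mu> (inv\<^bsub>G'\<^esub> a) q" .
qed (use nonneg bdd in \<open>rule fuzzy_image_nonneg\<close>)

lemma Q_fuzzy_subgroup_cond_fuzzy_image_anti_hom:
  assumes "group G" "group G'" "anti_hom G G' f"
    and "\<forall>x\<in>carrier G. \<forall>q\<in>Q. 0 \<le> \<mu> x q"
    and "\<forall>q\<in>Q. bdd_above ((\<lambda>x. \<mu> x q) ` carrier G)"
    and "Q_fuzzy_subgroup_cond G Q \<mu>"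
  shows "Q_fuzzy_subgroup_cond G' Q (fuzzy_image G f \<mu>)"
  unfolding Q_fuzzy_subgroup_cond_def
proof (intro conjI ballI)
  fix a b q assume "q \<in> Q"
  then show "min (fuzzy_image G f \<mu> a q) (fuzzy_image G f \<mu> b q) \<le> fuzzy_image G f \<mu> (a \<otimes>\<^bsub>G'\<^esub> b) q"
    and "fuzzy_image G f \<mu> a q \<le> fuzzy_image G f \<mu> (inv\<^bsub>G'\<^esub> a) q"
    using assms fuzzy_image_mult_ge[of G G' f \<mu> q] fuzzy_image_inv_ge[of G G' f \<mu> q]
    unfolding Q_fuzzy_subgroup_cond_def by (simp_all add: group.is_monoid)
qed

theorem proposition5p2:
  fixes G :: "('a, 'c) monoid_scheme" and G' :: "('b, 'd) monoid_scheme"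
    and Q :: "'q set" and \<alpha> :: real and f :: "'a \<Rightarrow> 'b" and \<theta> :: "'a \<Rightarrow> 'q \<Rightarrow> real"
  assumes "group G" and "group G'" and "Q \<noteq> {}"
    and "0 \<le> \<alpha>" and "\<alpha> \<le> 1"
    and "anti_hom G G' f"
    and "Q_fuzzy_subset G Q \<theta>"
    and "Q_fuzzy_subgroup_cond G Q (alpha_cut \<theta> \<alpha>)"
  shows "Q_fuzzy_subgroup_cond G' Q (fuzzy_image G f (alpha_cut \<theta> \<alpha>))"
proof (rule Q_fuzzy_subgroup_cond_fuzzy_image_anti_hom)
  show "\<forall>x\<in>carrier G. \<forall>q\<in>Q. 0 \<le> alpha_cut \<theta> \<alpha> x q"
    using assms(4,7) unfolding Q_fuzzy_subset_def alpha_cut_def by simp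
  show "\<forall>q\<in>Q. bdd_above ((\<lambda>x. alpha_cut \<theta> \<alpha> x q) ` carrier G)"
    unfolding alpha_cut_def by (auto intro: bdd_aboveI2[where M = \<alpha>])
qed (use assms in auto)

end
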